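(* Let $(X,\delta,c)$ be an accepting automaton over $\Sigma$ and let $\mu\mathrm{PL}(\delta,c)$ be as in the context. Then $\mu\mathrm{PL}(\delta,c)$ is minimal: for any two states $U,V$ of $\mu\mathrm{PL}(\delta,c)$, if $L(U)=L(V)$ then $U=V$.
   Context: $\Sigma$ is a finite alphabet, $\Sigma^\ast$ the free monoid with empty word $\epsilon$, $u^r$ the reversal of a word $u$. An accepting automaton is $(X,\delta,c)$ with $\delta:X\to X^\Sigma$ (extended to words by $\delta(x)(\epsilon)=x$, $\delta(x)(wa)=\delta(\delta(x)(w))(a)$) and $c\subseteq X$. Define $\widehat{\delta}:P(X)\to P(X)^\Sigma$ by $\widehat{\delta}(U)(a)=\{x\in X\mid\delta(x)(a)\in U\}$, extended to words in the same way, so that $\widehat{\delta}(U)(w)=\{x\mid\delta(x)(w^r)\in U\}$. Let $\langle c\rangle=\{\widehat{\delta}(c)(w)\mid w\in\Sigma^\ast\}$ and let $\approx$ be the congruence on $\Sigma^\ast$ given by $u\approx v$ iff $\widehat{\delta}(U)(u)=\widehat{\delta}(U)(v)$ for all $U\in\langle c\rangle$. $\mu\mathrm{PL}(\delta,c)$ is the accepting automaton with state space $P(\Sigma^\ast/{\approx})$, transition $\widehat{\sigma}(\mathcal{U})(u)=\{[w]\mid[wu^r]\in\mathcal{U}\}$ and final states $\{\mathcal{U}\mid[\epsilon]\in\mathcal{U}\}$. For a state $\mathcal{U}$, $L(\mathcal{U})=\{u\in\Sigma^\ast\mid[\epsilon]\in\widehat{\sigma}(\mathcal{U})(u)\}$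 is the language it accepts. *)

theory Defs
  imports Main
begin

definition delta_word :: "('x \<Rightarrow> 'a \<Rightarrow> 'x) \<Rightarrow> 'x \<Rightarrow> 'a list \<Rightarrow> 'x" where
  "delta_word \<delta> x w = foldl \<delta> x w"

definition hat_delta1 :: "('x \<Rightarrow> 'a \<Rightarrow> 'x) \<Rightarrow> 'x set \<Rightarrow> 'a \<Rightarrow> 'x set" where
  "hat_delta1 \<delta> U a = {x. \<delta> x a \<in> U}"

definition hat_delta :: "('x \<Rightarrow> 'a \<Rightarrow> 'x) \<Rightarrow> 'x set \<Rightarrow> 'a list \<Rightarrow> 'x set" where
  "hat_delta \<delta> U w = foldl (hat_delta1 \<delta>) U w"

definition gen :: "('x \<Rightarrow> 'a \<Rightarrow> 'x) \<Rightarrow> 'x set \<Rightarrow> 'x set set" where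
  "gen \<delta> c = {hat_delta \<delta> c w | w. True}"

definition approx_rel :: "('x \<Rightarrow> 'a \<Rightarrow> 'x) \<Rightarrow> 'x set \<Rightarrow> ('a list \<times> 'a list) set" where
  "approx_rel \<delta> c = {(u, v). \<forall>U \<in> gen \<delta> c. hat_delta \<delta> U u = hat_delta \<delta> U v}"

definition cls :: "('x \<Rightarrow> 'a \<Rightarrow> 'x) \<Rightarrow> 'x set \<Rightarrow> 'a list \<Rightarrow> 'a list set" where
  "cls \<delta> c w = approx_rel \<delta> c `` {w}"

definition muPL_states :: "('x \<Rightarrow> 'a \<Rightarrow> 'x) \<Rightarrow> 'x set \<Rightarrow> 'a list set set set" where
  "muPL_states \<delta> c = Pow (UNIV // approx_rel \<delta> c)"

definition muPL_trans :: "('x \<Rightarrow> 'a \<Rightarrow> 'x) \<Rightarrow> 'x set \<Rightarrow> 'a list set set \<Rightarrow> 'a list \<Rightarrow> 'a list set set" where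
  "muPL_trans \<delta> c \<U> u = {cls \<delta> c w | w. cls \<delta> c (w @ rev u) \<in> \<U>}"

definition muPL_final :: "('x \<Rightarrow> 'a \<Rightarrow> 'x) \<Rightarrow> 'x set \<Rightarrow> 'a list set set set" where
  "muPL_final \<delta> c = {\<U> \<in> muPL_states \<delta> c. cls \<delta> c [] \<in> \<U>}"

definition muPL_lang :: "('x \<Rightarrow> 'a \<Rightarrow> 'x) \<Rightarrow> 'x set \<Rightarrow> 'a list set set \<Rightarrow> 'a list set" where
  "muPL_lang \<delta> c \<U> = {u. cls \<delta> c [] \<in> muPL_trans \<delta> c \<U> u}"

end

theory Submission
  imports Defs
begin

text \<open>A state \<open>\<U>\<close> of \<open>\<mu>PL(\<delta>, c)\<close> accepts \<open>u\<close> iff \<open>[u\<^sup>r] \<in> \<U>\<close>: if \<open>[w] = [\<epsilon>]\<close> then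
  \<open>[w u\<^sup>r] = [u\<^sup>r]\<close>, because \<open>\<approx>\<close> is a right congruence. Hence every state, being a set of
  \<open>\<approx>\<close>-classes, is recovered from its language as \<open>{[u\<^sup>r] | u \<in> L(\<U>)}\<close>.\<close>

lemma hat_delta_append: "hat_delta \<delta> U (u @ v) = hat_delta \<delta> (hat_delta \<delta> U u) v"
  by (simp add: hat_delta_def)

lemma equiv_approx_rel: "equiv UNIV (approx_rel \<delta> c)"
  by (auto simp: approx_rel_def equiv_def refl_on_def sym_def trans_def)

lemma cls_eq_iff: "cls \<delta> c u = cls \<delta> c v \<longleftrightarrow> (u, v) \<in> approx_rel \<delta> c"
  unfolding cls_def using equiv_class_eq_iff[OF equiv_approx_rel] by blast

lemma approx_rel_append_right:
  assumes "(u, v) \<in> approx_rel \<delta> c"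
  shows "(u @ w, v @ w) \<in> approx_rel \<delta> c"
  using assms by (simp add: approx_rel_def hat_delta_append)

lemma muPL_lang_iff: "u \<in> muPL_lang \<delta> c \<U> \<longleftrightarrow> cls \<delta> c (rev u) \<in> \<U>"
proof
  assume "u \<in> muPL_lang \<delta> c \<U>"
  then obtain w where "cls \<delta> c w = cls \<delta> c []" and w: "cls \<delta> c (w @ rev u) \<in> \<U>"
    by (auto simp: muPL_lang_def muPL_trans_def)
  then have "cls \<delta> c (w @ rev u) = cls \<delta> c (rev u)"
    using approx_rel_append_right[of w "[]"] by (simp add: cls_eq_iff)
  with w show "cls \<delta> c (rev u) \<in> \<U>" by simp
next
  assume "cls \<delta> c (rev u) \<in> \<U>"
  then show "u \<in> muPL_lang \<delta> c \<U>"
    by (auto simp: muPL_lang_def muPL_trans_def intro!: exI[of _ "[]"])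
qed

lemma muPL_state_eq_image_lang:
  assumes "\<U> \<in> muPL_states \<delta> c"
  shows "\<U> = (\<lambda>u. cls \<delta> c (rev u)) ` muPL_lang \<delta> c \<U>"
proof (intro equalityI subsetI)
  fix X assume "X \<in> \<U>"
  moreover from this assms obtain w where "X = cls \<delta> c w"
    by (auto simp: muPL_states_def cls_def elim: quotientE)
  ultimately show "X \<in> (\<lambda>u. cls \<delta> c (rev u)) ` muPL_lang \<delta> c \<U>"
    by (auto simp: muPL_lang_iff intro!: image_eqI[of _ _ "rev w"])
qed (auto simp: muPL_lang_iff)

theorem mainTheorem5:
  fixes \<delta> :: "'x \<Rightarrow> 'a \<Rightarrow> 'x" and c :: "'x set"
    and U V :: "'a list set set"
  assumes "finite (UNIV :: 'a set)"
    and "U \<in> muPL_states \<delta> c" and "V \<in> muPL_states \<delta> c"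
    and "muPL_lang \<delta> c U = muPL_lang \<delta> c V"
  shows "U = V"
  using muPL_state_eq_image_lang[OF assms(2)] muPL_state_eq_image_lang[OF assms(3)] assms(4)
  by simp

end
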